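(* Let $p\in[0,1]$, $\lambda\in(0,1)$, let $E$ be a linear subspace of $\mathbb R^n$, let $A,C$ be origin-symmetric convex bodies in $E$ and $B,D$ origin-symmetric convex bodies in $E^\perp$. Then $$(1-\lambda)\cdot(A+B)+_p\lambda\cdot(C+D)=\big((1-\lambda)\cdot A+_p\lambda\cdot C\big)+\big((1-\lambda)\cdot B+_p\lambda\cdot D\big),$$ where on the left the $L_p$-combination is taken in $\mathbb R^n$, and on the right $(1-\lambda)\cdot A+_p\lambda\cdot C$ and $(1-\lambda)\cdot B+_p\lambda\cdot D$ denote the $L_p$-combinations in $E$ and $E^\perp$ respectively.
   Context: A convex body in a Euclidean space $F$ is a compact convex subset of $F$ with nonempty interior in $F$; $h_K(x)=\max_{y\in K}\langle x,y\rangle$. For a continuous $f$ on the unit sphere of $F$ with positive values, $W(f)$ is the largest convex body in $F$ whose support function is $\le f$ on that sphere. For convex bodies $K,L$ in $F$ containing the origin in their interior, $(1-\lambda)\cdot K+_p\lambda\cdot L:=W\big(((1-\lambda)h_K^p+\lambda h_L^p)^{1/p}\big)$ for $p\neq0$ and $W(h_K^{1-\lambda}h_L^\lambda)$ for $p=0$. $A+B$ denotes the Minkowski sum. *)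

theory Defs
  imports "HOL-Analysis.Analysis"
begin

definition convex_body_in :: "(real^'n) set \<Rightarrow> (real^'n) set \<Rightarrow> bool" where
  "convex_body_in F K \<longleftrightarrow> compact K \<and> convex K \<and> K \<subseteq> F \<and>
     (\<exists>U. openin (top_of_set F) U \<and> U \<noteq> {} \<and> U \<subseteq> K)"

definition origin_symmetric :: "(real^'n) set \<Rightarrow> bool" where
  "origin_symmetric K \<longleftrightarrow> (\<forall>x\<in>K. - x \<in> K)"

definition supp :: "(real^'n) set \<Rightarrow> real^'n \<Rightarrow> real" where
  "supp K x = Sup ((\<lambda>y. x \<bullet> y) ` K)"

definition unit_sphere_in :: "(real^'n) set \<Rightarrow> (real^'n) set" where
  "unit_sphere_in F = {u \<in> F. norm u = 1}"

definition Wulff :: "(real^'n) set \<Rightarrow> (real^'n \<Rightarrow> real) \<Rightarrow> (real^'n) set" where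
  "Wulff F f = (THE K. convex_body_in F K \<and> (\<forall>u\<in>unit_sphere_in F. supp K u \<le> f u) \<and>
      (\<forall>L. convex_body_in F L \<and> (\<forall>u\<in>unit_sphere_in F. supp L u \<le> f u) \<longrightarrow> L \<subseteq> K))"

definition Lp_comb :: "(real^'n) set \<Rightarrow> real \<Rightarrow> real \<Rightarrow> (real^'n) set \<Rightarrow> (real^'n) set \<Rightarrow> (real^'n) set" where
  "Lp_comb F p t K L =
     (if p = 0 then Wulff F (\<lambda>u. supp K u powr (1 - t) * supp L u powr t)
      else Wulff F (\<lambda>u. ((1 - t) * supp K u powr p + t * supp L u powr p) powr (1 / p)))"

definition minkowski_sum :: "(real^'n) set \<Rightarrow> (real^'n) set \<Rightarrow> (real^'n) set" where
  "minkowski_sum A B = {a + b | a b. a \<in> A \<and> b \<in> B}"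

end

theory Submission
  imports Defs
begin

(*
  Both sides are intersections of half-spaces.  If f is bounded between positive constants on
  the unit sphere of a subspace F, then W(f) is the set of x in F with u . x <= f u for all unit
  vectors u of F, and when f is positively homogeneous the constraint may be imposed for all
  u in F.  The L_p combination of K and L is W of the p-mean M_p(h_K, h_L), which is
  homogeneous.  Writing u = v + w with v in E and w in E^perp, we have
  h_(A+B)(v + w) = h_A(v) + h_B(w); restricted to E and to E^perp the constraints of the left
  side are exactly those of the two summands on the right.  Conversely, adding the constraints
  of the summands at v and at w gives the constraint at v + w, because M_p is superadditive for
  p <= 1, a reverse Minkowski inequality that reduces to Hoelder's inequality.
*)

definition power_mean :: "real \<Rightarrow> real \<Rightarrow> real \<Rightarrow> real \<Rightarrow> real" where
  "power_mean p t x y =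
     (if p = 0 then x powr (1 - t) * y powr t
      else ((1 - t) * x powr p + t * y powr p) powr (1 / p))"

lemma Lp_comb_eq_Wulff_power_mean:
  "Lp_comb F p t K L = Wulff F (\<lambda>u. power_mean p t (supp K u) (supp L u))"
  unfolding Lp_comb_def power_mean_def by simp

lemma power_mean_nonneg: "0 \<le> power_mean p t x y"
  unfolding power_mean_def by simp

lemma power_mean_idem:
  assumes "0 \<le> x" shows "power_mean p t x x = x"
proof (cases "x = 0")
  case False
  then show ?thesis
    using assms by (simp add: power_mean_def powr_powr algebra_simps flip: powr_add)
qed (simp add: power_mean_def)

lemma power_mean_pos:
  assumes "0 < x" "0 < y" "0 \<le> t" "t \<le> 1" shows "0 < power_mean p t x y"
proof -
  have "0 < (1 - t) * x powr p + t * y powr p"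
    using assms by (cases "t = 0") (auto intro: add_nonneg_pos add_pos_nonneg)
  then show ?thesis using assms unfolding power_mean_def by auto
qed

lemma power_mean_mono:
  assumes "0 \<le> p" "0 \<le> t" "t \<le> 1" "0 \<le> x" "x \<le> x'" "0 \<le> y" "y \<le> y'"
  shows "power_mean p t x y \<le> power_mean p t x' y'"
  using assms unfolding power_mean_def
  by (auto intro!: mult_mono powr_mono2 add_mono mult_left_mono)

lemma power_mean_mult:
  assumes "0 < c"
  shows "power_mean p t (c * x) (c * y) = c * power_mean p t x y"
proof (cases "p = 0")
  case True
  have "c powr (1 - t) * c powr t = c" using assms by (simp flip: powr_add)
  then show ?thesis using True by (simp add: power_mean_def powr_mult algebra_simps)
next
  case False
  have "(1 - t) * (c * x) powr p + t * (c * y) powr p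
      = c powr p * ((1 - t) * x powr p + t * y powr p)"
    by (simp add: powr_mult algebra_simps)
  moreover have "(c powr p) powr (1 / p) = c" using False assms by (simp add: powr_powr)
  ultimately show ?thesis using False by (simp add: power_mean_def powr_mult)
qed

lemma Hoelder_inequality_two_terms:
  fixes a b c d \<alpha> :: real
  assumes "0 \<le> \<alpha>" "\<alpha> \<le> 1" "0 < a" "0 < b" "0 < c" "0 < d"
  shows "a powr (1 - \<alpha>) * c powr \<alpha> + b powr (1 - \<alpha>) * d powr \<alpha>
     \<le> (a + b) powr (1 - \<alpha>) * (c + d) powr \<alpha>"
proof -
  define X Y where "X = a + b" and "Y = c + d"
  have XY: "0 < X" "0 < Y" using assms by (auto simp: X_def Y_def)
  have "(a/X) powr (1 - \<alpha>) * (c/Y) powr \<alpha> + (b/X) powr (1 - \<alpha>) * (d/Y) powr \<alpha>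
      \<le> ((1 - \<alpha>) * (a/X) + \<alpha> * (c/Y)) + ((1 - \<alpha>) * (b/X) + \<alpha> * (d/Y))"
    using assms XY by (intro add_mono Youngs_inequality_0) auto
  also have "\<dots> = (1 - \<alpha>) * ((a + b) / X) + \<alpha> * ((c + d) / Y)"
    by (simp add: algebra_simps add_divide_distrib)
  also have "\<dots> = 1" using XY by (simp add: X_def Y_def)
  finally have "(a powr (1 - \<alpha>) * c powr \<alpha> + b powr (1 - \<alpha>) * d powr \<alpha>)
      / (X powr (1 - \<alpha>) * Y powr \<alpha>) \<le> 1"
    using assms XY by (simp add: powr_divide add_divide_distrib)
  then show ?thesis using XY by (simp add: X_def Y_def divide_le_eq)
qed

lemma power_mean_superadditive_pos:
  assumes "0 \<le> p" "p \<le> 1" "0 \<le> t" "t \<le> 1" "0 < a" "0 < b" "0 < c" "0 < d"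
  shows "power_mean p t a c + power_mean p t b d \<le> power_mean p t (a + b) (c + d)"
proof (cases "p = 0")
  case True
  then show ?thesis using Hoelder_inequality_two_terms[of t a b c d] assms
    by (simp add: power_mean_def)
next
  case False
  then have p: "0 < p" using assms by auto
  define S T where "S = power_mean p t a c" and "T = power_mean p t b d"
  have ST: "0 < S" "0 < T" using assms by (auto simp: S_def T_def power_mean_pos)
  have Sp: "S powr p = (1 - t) * a powr p + t * c powr p"
    and Tp: "T powr p = (1 - t) * b powr p + t * d powr p"
    using p assms by (simp_all add: S_def T_def power_mean_def powr_powr)
  define Q where "Q = (1 - t) * (a + b) powr p + t * (c + d) powr p"
  \<comment> \<open>Write S + T as a convex combination of two Hoelder sums in the weights S and T.\<close>
  have "S + T = S powr (1 - p) * S powr p + T powr (1 - p) * T powr p"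
    using ST by (simp flip: powr_add)
  also have "\<dots> = (1 - t) * (S powr (1 - p) * a powr p + T powr (1 - p) * b powr p)
      + t * (S powr (1 - p) * c powr p + T powr (1 - p) * d powr p)"
    unfolding Sp Tp by (simp add: algebra_simps)
  also have "\<dots> \<le> (1 - t) * ((S + T) powr (1 - p) * (a + b) powr p)
      + t * ((S + T) powr (1 - p) * (c + d) powr p)"
    using assms ST
    by (intro add_mono mult_left_mono Hoelder_inequality_two_terms) auto
  also have "\<dots> = (S + T) powr (1 - p) * Q" by (simp add: Q_def algebra_simps)
  finally have "(S + T) powr (1 - p) * (S + T) powr p \<le> (S + T) powr (1 - p) * Q"
    using ST by (simp flip: powr_add)
  then have "(S + T) powr p \<le> Q" using ST by (simp add: mult_le_cancel_left)
  then have "((S + T) powr p) powr (1/p) \<le> Q powr (1/p)"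
    using ST p by (intro powr_mono2) auto
  then show ?thesis using ST p False by (simp add: S_def T_def Q_def power_mean_def powr_powr)
qed

lemma power_mean_superadditive:
  assumes "0 \<le> p" "p \<le> 1" "0 \<le> t" "t \<le> 1" "0 \<le> a" "0 \<le> b" "0 \<le> c" "0 \<le> d"
    and "a = 0 \<longleftrightarrow> c = 0" "b = 0 \<longleftrightarrow> d = 0"
  shows "power_mean p t a c + power_mean p t b d \<le> power_mean p t (a + b) (c + d)"
proof -
  consider "a = 0" "c = 0" | "b = 0" "d = 0" | "0 < a" "0 < b" "0 < c" "0 < d"
    using assms by fastforce
  then show ?thesis
    by cases (use assms power_mean_superadditive_pos in \<open>simp_all add: power_mean_idem\<close>)
qed

lemma minkowski_sum_eq_set_plus: "minkowski_sum A B = A + B"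
  unfolding minkowski_sum_def set_plus_def by auto

lemma inner_le_supp:
  assumes "bounded K" "y \<in> K" shows "u \<bullet> y \<le> supp K u"
proof -
  obtain R where R: "\<forall>x\<in>K. norm x \<le> R" using assms bounded_iff by blast
  have "u \<bullet> x \<le> norm u * R" if "x \<in> K" for x
    using R that norm_cauchy_schwarz[of u x] by (meson mult_left_mono norm_ge_zero order_trans)
  then have "bdd_above ((\<lambda>y. u \<bullet> y) ` K)" by (rule bdd_aboveI2)
  then show ?thesis unfolding supp_def using assms by (auto intro: cSup_upper)
qed

lemma supp_leI:
  assumes "K \<noteq> {}" "\<And>y. y \<in> K \<Longrightarrow> u \<bullet> y \<le> c" shows "supp K u \<le> c"
  unfolding supp_def using assms by (intro cSup_least) auto

lemma supp_zero [simp]: "K \<noteq> {} \<Longrightarrow> supp K 0 = 0"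
  unfolding supp_def by (simp add: image_constant_conv)

lemma supp_cong:
  assumes "\<And>y. y \<in> K \<Longrightarrow> u \<bullet> y = v \<bullet> y" shows "supp K u = supp K v"
  unfolding supp_def using assms by (metis image_cong)

lemma supp_le_norm:
  assumes "bounded K" "K \<noteq> {}"
  obtains R where "0 < R" "\<And>u. supp K u \<le> R * norm u"
proof -
  obtain R where R: "0 < R" "\<forall>x\<in>K. norm x \<le> R" using assms bounded_pos by blast
  have "supp K u \<le> R * norm u" for u
  proof (rule supp_leI[OF assms(2)])
    fix y assume "y \<in> K"
    then show "u \<bullet> y \<le> R * norm u" using R norm_cauchy_schwarz[of u y]
      by (metis mult.commute mult_left_mono norm_ge_zero order_trans)
  qed
  then show ?thesis using R that by blast
qed

lemma supp_scaleR:
  assumes "bounded K" "K \<noteq> {}" "0 < c" shows "supp K (c *\<^sub>R u) = c * supp K u"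
proof (rule antisym)
  show "supp K (c *\<^sub>R u) \<le> c * supp K u"
    using assms by (intro supp_leI) (auto intro: mult_left_mono inner_le_supp)
  have "supp K u \<le> supp K (c *\<^sub>R u) / c"
  proof (rule supp_leI[OF assms(2)])
    fix y assume "y \<in> K"
    then have "c * (u \<bullet> y) \<le> supp K (c *\<^sub>R u)"
      using inner_le_supp[OF assms(1), of y "c *\<^sub>R u"] by simp
    then show "u \<bullet> y \<le> supp K (c *\<^sub>R u) / c" using assms by (simp add: field_simps)
  qed
  then show "c * supp K u \<le> supp K (c *\<^sub>R u)" using assms by (simp add: field_simps)
qed

lemma supp_minkowski_sum:
  assumes "bounded A" "bounded B" "A \<noteq> {}" "B \<noteq> {}"
  shows "supp (minkowski_sum A B) u = supp A u + supp B u"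
proof (rule antisym)
  show "supp (minkowski_sum A B) u \<le> supp A u + supp B u"
    using assms by (intro supp_leI)
      (auto simp: minkowski_sum_def inner_add_right intro!: add_mono inner_le_supp)
  have "bounded (minkowski_sum A B)"
    using bounded_plus[OF assms(1,2)] by (simp add: minkowski_sum_eq_set_plus set_plus_image)
  then have "u \<bullet> a \<le> supp (minkowski_sum A B) u - u \<bullet> b" if "a \<in> A" "b \<in> B" for a b
    using that inner_le_supp[of _ "a + b" u] by (fastforce simp: minkowski_sum_def inner_add_right)
  then have "supp A u \<le> supp (minkowski_sum A B) u - u \<bullet> b" if "b \<in> B" for b
    using that assms(3) by (auto intro: supp_leI)
  then have "supp B u \<le> supp (minkowski_sum A B) u - supp A u"
    using assms(4) by (force intro: supp_leI)
  then show "supp A u + supp B u \<le> supp (minkowski_sum A B) u" by simp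
qed

lemma orthogonal_comp_inner_eq_0:
  "x \<in> E \<Longrightarrow> y \<in> orthogonal_comp E \<Longrightarrow> x \<bullet> y = 0"
  "x \<in> E \<Longrightarrow> y \<in> orthogonal_comp E \<Longrightarrow> y \<bullet> x = 0"
  by (auto simp: orthogonal_comp_def orthogonal_def inner_commute)

lemma orthogonal_comp_decompose:
  fixes u :: "'a::euclidean_space"
  assumes "subspace E"
  obtains v w where "v \<in> E" "w \<in> orthogonal_comp E" "u = v + w"
  using subspace_sum_orthogonal_comp[OF assms] by (metis UNIV_I set_plus_elim)

lemma supp_orthogonal_sum:
  assumes "A \<subseteq> E" "B \<subseteq> orthogonal_comp E" "bounded A" "bounded B" "A \<noteq> {}" "B \<noteq> {}"
    and "v \<in> E" "w \<in> orthogonal_comp E"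
  shows "supp (minkowski_sum A B) (v + w) = supp A v + supp B w"
proof -
  have "supp A (v + w) = supp A v" "supp B (v + w) = supp B w"
    using assms by (auto intro!: supp_cong simp: inner_add_left orthogonal_comp_inner_eq_0)
  then show ?thesis using assms by (simp add: supp_minkowski_sum)
qed

lemma convex_body_inD:
  assumes "convex_body_in F K" shows "bounded K" "K \<noteq> {}" "K \<subseteq> F"
  using assms unfolding convex_body_in_def by (auto simp: compact_imp_bounded)

lemma symmetric_convex_body_contains_ball:
  assumes "subspace F" "convex_body_in F K" "origin_symmetric K"
  obtains r where "0 < r" "ball 0 r \<inter> F \<subseteq> K"
proof -
  obtain U where U: "openin (top_of_set F) U" "U \<noteq> {}" "U \<subseteq> K" and "convex K"
    using assms(2) unfolding convex_body_in_def by auto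
  obtain a where a: "a \<in> U" using U by auto
  then have "a \<in> F" "- a \<in> K" using U assms(3) openin_imp_subset unfolding origin_symmetric_def by blast+
  obtain e where e: "0 < e" "\<And>x. x \<in> F \<Longrightarrow> dist x a < e \<Longrightarrow> x \<in> U"
    using U(1) a unfolding openin_euclidean_subtopology_iff by blast
  have "x \<in> K" if "x \<in> F" "norm x < e/2" for x
  proof -
    \<comment> \<open>x is the midpoint of a + 2x, which lies in U, and of -a.\<close>
    have "a + 2 *\<^sub>R x \<in> K"
      using e that U(3) \<open>a \<in> F\<close> assms(1) by (auto simp: dist_norm subspace_add subspace_scale)
    then have "(1/2) *\<^sub>R (a + 2 *\<^sub>R x) + (1/2) *\<^sub>R (- a) \<in> K"
      using convexD[OF \<open>convex K\<close> _ \<open>- a \<in> K\<close>] by simp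
    then show ?thesis by (simp add: algebra_simps)
  qed
  then show ?thesis using that[of "e/2"] e by (force simp: dist_0_norm)
qed

lemma symmetric_convex_body_supp_ge_norm:
  assumes "subspace F" "convex_body_in F K" "origin_symmetric K"
  obtains r where "0 < r" "\<And>v. v \<in> F \<Longrightarrow> r * norm v \<le> supp K v"
proof -
  obtain r where r: "0 < r" "ball 0 r \<inter> F \<subseteq> K"
    using symmetric_convex_body_contains_ball[OF assms] .
  have "r/2 * norm v \<le> supp K v" if "v \<in> F" for v
  proof (cases "v = 0")
    case False
    define y where "y = (r/2 / norm v) *\<^sub>R v"
    have "y \<in> K" using r that False assms(1) by (auto simp: y_def subspace_scale)
    moreover have "v \<bullet> y = r/2 * norm v"
      using False by (simp add: y_def power2_norm_eq_inner[symmetric] power2_eq_square)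
    ultimately show ?thesis using inner_le_supp convex_body_inD(1)[OF assms(2)] by metis
  qed (use convex_body_inD[OF assms(2)] in simp)
  then show ?thesis using that[of "r/2"] r by auto
qed

lemma symmetric_convex_body_supp_nonneg:
  assumes "subspace F" "convex_body_in F K" "origin_symmetric K" "v \<in> F"
  shows "0 \<le> supp K v"
proof -
  obtain r where "0 < r" "r * norm v \<le> supp K v"
    using symmetric_convex_body_supp_ge_norm[OF assms(1-3)] assms(4) by metis
  then show ?thesis by (meson less_imp_le mult_nonneg_nonneg norm_ge_zero order_trans)
qed

lemma symmetric_convex_body_supp_eq_0_iff:
  assumes "subspace F" "convex_body_in F K" "origin_symmetric K" "v \<in> F"
  shows "supp K v = 0 \<longleftrightarrow> v = 0"
proof -
  obtain r where "0 < r" "r * norm v \<le> supp K v"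
    using symmetric_convex_body_supp_ge_norm[OF assms(1-3)] assms(4) by metis
  then show ?thesis using supp_zero[OF convex_body_inD(2)[OF assms(2)]] by (auto simp: mult_le_0_iff)
qed

lemma origin_symmetric_minkowski_sum:
  assumes "origin_symmetric A" "origin_symmetric B"
  shows "origin_symmetric (minkowski_sum A B)"
  unfolding origin_symmetric_def minkowski_sum_def
proof safe
  fix a b assume "a \<in> A" "b \<in> B"
  then have "- a \<in> A" "- b \<in> B" using assms unfolding origin_symmetric_def by blast+
  then show "\<exists>a' b'. - (a + b) = a' + b' \<and> a' \<in> A \<and> b' \<in> B" by force
qed

lemma norm_le_norm_add_orthogonal:
  assumes "orthogonal y z" shows "norm y \<le> norm (y + z)"
proof -
  have "(norm y)\<^sup>2 \<le> (norm (y + z))\<^sup>2" using norm_add_Pythagorean[OF assms] by simp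
  then show ?thesis by (rule power2_le_imp_le) simp
qed

lemma convex_body_in_UNIV_orthogonal_sum:
  assumes "subspace E" "convex_body_in E A" "origin_symmetric A"
    and "convex_body_in (orthogonal_comp E) B" "origin_symmetric B"
  shows "convex_body_in UNIV (minkowski_sum A B)"
proof -
  obtain rA where rA: "0 < rA" "ball 0 rA \<inter> E \<subseteq> A"
    using symmetric_convex_body_contains_ball[OF assms(1-3)] .
  obtain rB where rB: "0 < rB" "ball 0 rB \<inter> orthogonal_comp E \<subseteq> B"
    using symmetric_convex_body_contains_ball[OF subspace_orthogonal_comp assms(4,5)] .
  have "x \<in> minkowski_sum A B" if "norm x < min rA rB" for x
  proof -
    obtain y z where yz: "y \<in> E" "z \<in> orthogonal_comp E" "x = y + z"
      using orthogonal_comp_decompose[OF assms(1)] .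
    then have "orthogonal y z" "orthogonal z y"
      by (simp_all add: orthogonal_def orthogonal_comp_inner_eq_0)
    then have "norm y \<le> norm x" "norm z \<le> norm x"
      using yz norm_le_norm_add_orthogonal by (metis add.commute)+
    then show ?thesis using yz that rA rB unfolding minkowski_sum_def by force
  qed
  then have "ball 0 (min rA rB) \<subseteq> minkowski_sum A B" by auto
  moreover have "compact (minkowski_sum A B)"
    using assms(2,4) unfolding convex_body_in_def minkowski_sum_def by (simp add: compact_sums)
  moreover have "convex (minkowski_sum A B)"
    using assms(2,4) unfolding convex_body_in_def minkowski_sum_eq_set_plus by (simp add: convex_set_plus)
  ultimately show ?thesis
    using rA rB unfolding convex_body_in_def
    by (intro conjI exI[of _ "ball 0 (min rA rB)"]) auto
qed

lemma convex_body_in_halfspaces: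
  assumes "subspace F" "0 < m" "\<And>u. u \<in> unit_sphere_in F \<Longrightarrow> m \<le> f u \<and> f u \<le> R"
  shows "convex_body_in F {x \<in> F. \<forall>u\<in>unit_sphere_in F. u \<bullet> x \<le> f u}"
    (is "convex_body_in F ?W")
proof -
  have W_eq: "?W = F \<inter> (\<Inter>u\<in>unit_sphere_in F. {x. u \<bullet> x \<le> f u})" by auto
  have "norm x \<le> R" if "x \<in> ?W" "x \<noteq> 0" for x
  proof -
    let ?u = "(1 / norm x) *\<^sub>R x"
    have "?u \<in> unit_sphere_in F" using that assms(1) by (auto simp: unit_sphere_in_def subspace_scale)
    moreover have "?u \<bullet> x = norm x"
      using that by (simp add: power2_norm_eq_inner[symmetric] power2_eq_square)
    ultimately show ?thesis using that assms(3) by fastforce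
  qed
  then have "?W \<subseteq> cball 0 (max R 0)" by force
  then have "bounded ?W" by (rule bounded_subset[OF bounded_cball])
  moreover have "closed ?W"
    unfolding W_eq by (intro closed_Int closed_INT closed_subspace assms(1) ballI closed_halfspace_le)
  ultimately have "compact ?W" by (simp add: compact_eq_bounded_closed)
  moreover have "convex ?W"
    unfolding W_eq by (intro convex_Int convex_INT subspace_imp_convex assms(1) ballI convex_halfspace_le)
  moreover have "F \<inter> ball 0 m \<subseteq> ?W"
  proof clarify
    fix x u assume "x \<in> F" "x \<in> ball 0 m" "u \<in> unit_sphere_in F"
    then have "u \<bullet> x < m" using norm_cauchy_schwarz[of u x] by (simp add: unit_sphere_in_def)
    then show "u \<bullet> x \<le> f u" using assms(3) \<open>u \<in> unit_sphere_in F\<close> by force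
  qed
  moreover have "0 \<in> F \<inter> ball 0 m" using assms(1,2) by (simp add: subspace_0)
  ultimately show ?thesis unfolding convex_body_in_def
    by (intro conjI exI[of _ "F \<inter> ball 0 m"]) (auto simp: openin_open_Int)
qed

lemma Wulff_eq_halfspaces:
  assumes "subspace F" "0 < m" "\<And>u. u \<in> unit_sphere_in F \<Longrightarrow> m \<le> f u \<and> f u \<le> R"
  shows "Wulff F f = {x \<in> F. \<forall>u\<in>unit_sphere_in F. u \<bullet> x \<le> f u}" (is "_ = ?W")
  unfolding Wulff_def
proof (rule the_equality)
  have body: "convex_body_in F ?W" by (rule convex_body_in_halfspaces[OF assms])
  have below: "L \<subseteq> ?W" if "convex_body_in F L" "\<forall>u\<in>unit_sphere_in F. supp L u \<le> f u" for L
  proof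
    fix y assume "y \<in> L"
    then have "y \<in> F" "\<And>u. u \<bullet> y \<le> supp L u"
      using convex_body_inD[OF that(1)] inner_le_supp by auto
    then show "y \<in> ?W" using that(2) by (auto intro: order_trans)
  qed
  have supp_W: "\<forall>u\<in>unit_sphere_in F. supp ?W u \<le> f u"
    using convex_body_inD(2)[OF body] by (auto intro: supp_leI)
  then show "convex_body_in F ?W \<and> (\<forall>u\<in>unit_sphere_in F. supp ?W u \<le> f u) \<and>
      (\<forall>L. convex_body_in F L \<and> (\<forall>u\<in>unit_sphere_in F. supp L u \<le> f u) \<longrightarrow> L \<subseteq> ?W)"
    using body below by blast
  show "K = ?W" if "convex_body_in F K \<and> (\<forall>u\<in>unit_sphere_in F. supp K u \<le> f u) \<and>
      (\<forall>L. convex_body_in F L \<and> (\<forall>u\<in>unit_sphere_in F. supp L u \<le> f u) \<longrightarrow> L \<subseteq> K)" for K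
    using that below[of K] body supp_W by blast
qed

lemma halfspaces_unit_sphere_eq:
  assumes "subspace F" "0 \<le> f 0" "\<And>v c. v \<in> F \<Longrightarrow> 0 < c \<Longrightarrow> f (c *\<^sub>R v) = c * f v"
  shows "{x \<in> F. \<forall>u\<in>unit_sphere_in F. u \<bullet> x \<le> f u} = {x \<in> F. \<forall>v\<in>F. v \<bullet> x \<le> f v}"
proof -
  have "v \<bullet> x \<le> f v" if "\<forall>u\<in>unit_sphere_in F. u \<bullet> x \<le> f u" "v \<in> F" "v \<noteq> 0" for x v
  proof -
    let ?u = "(1 / norm v) *\<^sub>R v"
    have "?u \<in> unit_sphere_in F" using that assms(1) by (auto simp: unit_sphere_in_def subspace_scale)
    have "v \<bullet> x = norm v * (?u \<bullet> x)" using that by simp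
    also have "\<dots> \<le> norm v * f ?u"
      using \<open>?u \<in> unit_sphere_in F\<close> that(1) by (intro mult_left_mono) auto
    also have "\<dots> = f v"
      using that assms(1) assms(3)[of ?u "norm v"] by (simp add: subspace_scale)
    finally show ?thesis .
  qed
  then show ?thesis using assms(2) by (fastforce simp: unit_sphere_in_def)
qed

lemma Lp_comb_eq_halfspaces:
  assumes "subspace F" "0 \<le> p" "0 \<le> t" "t \<le> 1"
    and K: "convex_body_in F K" "origin_symmetric K"
    and L: "convex_body_in F L" "origin_symmetric L"
  shows "Lp_comb F p t K L = {x \<in> F. \<forall>v\<in>F. v \<bullet> x \<le> power_mean p t (supp K v) (supp L v)}"
proof -
  define f where "f v = power_mean p t (supp K v) (supp L v)" for v
  obtain rK rL where r: "0 < rK" "0 < rL"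
    and lower: "\<And>v. v \<in> F \<Longrightarrow> rK * norm v \<le> supp K v" "\<And>v. v \<in> F \<Longrightarrow> rL * norm v \<le> supp L v"
    using symmetric_convex_body_supp_ge_norm[OF assms(1) K] symmetric_convex_body_supp_ge_norm[OF assms(1) L]
    by metis
  obtain RK RL where upper: "\<And>v. supp K v \<le> RK * norm v" "\<And>v. supp L v \<le> RL * norm v"
    using supp_le_norm convex_body_inD(1,2) K(1) L(1) by metis
  have "min rK rL \<le> f u \<and> f u \<le> max RK RL" if "u \<in> unit_sphere_in F" for u
  proof -
    have u: "u \<in> F" "norm u = 1" using that by (auto simp: unit_sphere_in_def)
    have lo: "min rK rL \<le> supp K u" "min rK rL \<le> supp L u" "0 \<le> min rK rL"
      using lower[OF u(1)] u(2) r by auto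
    have hi: "supp K u \<le> max RK RL" "supp L u \<le> max RK RL"
      using upper[of u] u(2) by auto
    have "min rK rL = power_mean p t (min rK rL) (min rK rL)" using lo by (simp add: power_mean_idem)
    also have "\<dots> \<le> f u" unfolding f_def using lo assms(2-4) by (intro power_mean_mono) auto
    finally have "min rK rL \<le> f u" .
    moreover have "f u \<le> power_mean p t (max RK RL) (max RK RL)"
      unfolding f_def using lo hi assms(2-4) by (intro power_mean_mono) auto
    moreover have "\<dots> = max RK RL"
      using lo(1,3) hi(1) by (intro power_mean_idem) linarith
    ultimately show ?thesis by simp
  qed
  then have "Lp_comb F p t K L = {x \<in> F. \<forall>u\<in>unit_sphere_in F. u \<bullet> x \<le> f u}"
    unfolding Lp_comb_eq_Wulff_power_mean f_def[symmetric]
    using r by (intro Wulff_eq_halfspaces[OF assms(1), of "min rK rL" f "max RK RL"]) auto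
  also have "\<dots> = {x \<in> F. \<forall>v\<in>F. v \<bullet> x \<le> f v}"
  proof (rule halfspaces_unit_sphere_eq[OF assms(1)])
    show "0 \<le> f 0" by (simp add: f_def power_mean_nonneg)
    show "f (c *\<^sub>R v) = c * f v" if "v \<in> F" "0 < c" for v c
      using that K(1) L(1) by (simp add: f_def supp_scaleR convex_body_inD power_mean_mult)
  qed
  finally show ?thesis by (simp add: f_def)
qed

lemma halfspaces_orthogonal_sum:
  fixes f g k :: "'a::euclidean_space \<Rightarrow> real"
  assumes "subspace E"
    and "\<And>v. v \<in> E \<Longrightarrow> f v \<le> g v" "\<And>w. w \<in> orthogonal_comp E \<Longrightarrow> f w \<le> k w"
    and "\<And>v w. v \<in> E \<Longrightarrow> w \<in> orthogonal_comp E \<Longrightarrow> g v + k w \<le> f (v + w)"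
  shows "{x. \<forall>u. u \<bullet> x \<le> f u} =
    {y \<in> E. \<forall>v\<in>E. v \<bullet> y \<le> g v} + {z \<in> orthogonal_comp E. \<forall>w\<in>orthogonal_comp E. w \<bullet> z \<le> k w}"
    (is "?X = ?Y + ?Z")
proof (intro set_eqI iffI)
  fix x assume x: "x \<in> ?X"
  obtain y z where yz: "y \<in> E" "z \<in> orthogonal_comp E" "x = y + z"
    using orthogonal_comp_decompose[OF assms(1)] .
  have "v \<bullet> y \<le> g v" if "v \<in> E" for v
  proof -
    have "v \<bullet> y = v \<bullet> x" using yz that by (simp add: inner_add_right orthogonal_comp_inner_eq_0)
    then show ?thesis using x assms(2)[OF that] by (metis mem_Collect_eq order_trans)
  qed
  moreover have "w \<bullet> z \<le> k w" if "w \<in> orthogonal_comp E" for w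
  proof -
    have "w \<bullet> z = w \<bullet> x" using yz that by (simp add: inner_add_right orthogonal_comp_inner_eq_0)
    then show ?thesis using x assms(3)[OF that] by (metis mem_Collect_eq order_trans)
  qed
  ultimately show "x \<in> ?Y + ?Z" using yz by (auto intro: set_plus_intro)
next
  fix x assume "x \<in> ?Y + ?Z"
  then obtain y z where y: "y \<in> E" "\<forall>v\<in>E. v \<bullet> y \<le> g v"
    and z: "z \<in> orthogonal_comp E" "\<forall>w\<in>orthogonal_comp E. w \<bullet> z \<le> k w" and "x = y + z"
    by (auto elim: set_plus_elim)
  have "u \<bullet> x \<le> f u" for u
  proof -
    obtain v w where vw: "v \<in> E" "w \<in> orthogonal_comp E" "u = v + w"
      using orthogonal_comp_decompose[OF assms(1)] .
    then have "u \<bullet> x = v \<bullet> y + w \<bullet> z"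
      using y(1) z(1) \<open>x = y + z\<close> by (simp add: inner_add_left inner_add_right orthogonal_comp_inner_eq_0)
    also have "\<dots> \<le> g v + k w" using y z vw by (simp add: add_mono)
    also have "\<dots> \<le> f u" using assms(4) vw by simp
    finally show ?thesis .
  qed
  then show "x \<in> ?X" by simp
qed

theorem lemma3p1:
  fixes E :: "(real^'n) set" and A B C D :: "(real^'n) set" and p t :: real
  assumes "0 \<le> p" "p \<le> 1" "0 < t" "t < 1"
    and "subspace E"
    and "convex_body_in E A" "origin_symmetric A"
    and "convex_body_in E C" "origin_symmetric C"
    and "convex_body_in (orthogonal_comp E) B" "origin_symmetric B"
    and "convex_body_in (orthogonal_comp E) D" "origin_symmetric D"
  shows "Lp_comb UNIV p t (minkowski_sum A B) (minkowski_sum C D) =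
         minkowski_sum (Lp_comb E p t A C) (Lp_comb (orthogonal_comp E) p t B D)"
proof -
  note bodies = assms(6-13) and E_perp = subspace_orthogonal_comp[of E]
  note supp_facts = symmetric_convex_body_supp_nonneg symmetric_convex_body_supp_eq_0_iff
  have supp_sum: "supp (minkowski_sum A B) (v + w) = supp A v + supp B w"
      "supp (minkowski_sum C D) (v + w) = supp C v + supp D w"
    if "v \<in> E" "w \<in> orthogonal_comp E" for v w
    using that bodies by (metis supp_orthogonal_sum convex_body_inD)+
  have "Lp_comb UNIV p t (minkowski_sum A B) (minkowski_sum C D) = {x. \<forall>u. u \<bullet> x \<le>
      power_mean p t (supp (minkowski_sum A B) u) (supp (minkowski_sum C D) u)}"
    using assms by (simp add: Lp_comb_eq_halfspaces convex_body_in_UNIV_orthogonal_sum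
        origin_symmetric_minkowski_sum)
  also have "\<dots> = {y \<in> E. \<forall>v\<in>E. v \<bullet> y \<le> power_mean p t (supp A v) (supp C v)} +
      {z \<in> orthogonal_comp E. \<forall>w\<in>orthogonal_comp E. w \<bullet> z \<le> power_mean p t (supp B w) (supp D w)}"
  proof (rule halfspaces_orthogonal_sum[OF assms(5)])
    show "power_mean p t (supp (minkowski_sum A B) v) (supp (minkowski_sum C D) v)
        \<le> power_mean p t (supp A v) (supp C v)" if "v \<in> E" for v
      using that supp_sum[of v 0] bodies by (simp add: subspace_0[OF E_perp] convex_body_inD)
    show "power_mean p t (supp (minkowski_sum A B) w) (supp (minkowski_sum C D) w)
        \<le> power_mean p t (supp B w) (supp D w)" if "w \<in> orthogonal_comp E" for w
      using that supp_sum[of 0 w] bodies by (simp add: subspace_0[OF assms(5)] convex_body_inD)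
    show "power_mean p t (supp A v) (supp C v) + power_mean p t (supp B w) (supp D w)
        \<le> power_mean p t (supp (minkowski_sum A B) (v + w)) (supp (minkowski_sum C D) (v + w))"
      if "v \<in> E" "w \<in> orthogonal_comp E" for v w
      unfolding supp_sum[OF that] using assms that
      by (intro power_mean_superadditive) (auto simp: supp_facts[OF assms(5)] supp_facts[OF E_perp])
  qed
  also have "\<dots> = Lp_comb E p t A C + Lp_comb (orthogonal_comp E) p t B D"
    using assms by (simp add: Lp_comb_eq_halfspaces E_perp)
  finally show ?thesis by (simp add: minkowski_sum_eq_set_plus)
qed

end
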